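(* Fix constants $0<A_m<A_M$, $B_i>0$ for $2\le i\le 5$, $C>0$, and an integer $n\ge 2$. Let $T_0<b$ and let $x:[T_0,b]\to\mathbb{R}^2$ be a $C^5$ unit-speed curve with $\sup_t\|x^{(i)}(t)\|\le B_i$ for $2\le i\le 5$. Let $\epsilon>0$ be sufficiently small, let $T=(T_0<T_1<\dots<T_n\le b)$ satisfy $A_m\epsilon<L_j:=T_j-T_{j-1}<A_M\epsilon$ for $1\le j\le n$, let $Y_j=x(T_j)$, and suppose $T$ is admissible. Write $q_j:=(Y_j-Y_{j-1})/L_j=r_j(\cos\omega_j,\sin\omega_j)$ with $r_j>0$, $\omega_j\in\mathbb{R}$. Then there exist $0<\delta_0<\delta_1<1$, depending only on $A_m,A_M,B_2,B_3,B_4,C$ and $\epsilon$, such that $r_j\in[\delta_0,\delta_1]$ for all $1\le j\le n$.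
   Context: For $\epsilon$ sufficiently small $q_j\ne 0$, and one defines $k_j:=\dfrac{\sqrt{12(1-\|q_j\|^2)}}{L_j\|q_j\|}$ for $1\le j\le n$ (Euclidean norm). The sequence $T$ is called admissible when $k_j\ge C$ for all $1\le j\le n$. *)

theory Defs
  imports "HOL-Analysis.Analysis"
begin

definition C5_unit_curve ::
  "real \<Rightarrow> real \<Rightarrow> (real \<Rightarrow> real^2) \<Rightarrow> real \<Rightarrow> real \<Rightarrow> real \<Rightarrow> real \<Rightarrow> bool" where
  "C5_unit_curve T0 b x B2 B3 B4 B5 \<longleftrightarrow>
     (\<exists>D :: nat \<Rightarrow> real \<Rightarrow> real^2.
        D 0 = x \<and>
        (\<forall>i<5. \<forall>t\<in>{T0..b}. (D i has_vector_derivative D (Suc i) t) (at t within {T0..b})) \<and>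
        continuous_on {T0..b} (D 5) \<and>
        (\<forall>t\<in>{T0..b}. norm (D 1 t) = 1) \<and>
        (\<forall>t\<in>{T0..b}. norm (D 2 t) \<le> B2 \<and> norm (D 3 t) \<le> B3 \<and>
                        norm (D 4 t) \<le> B4 \<and> norm (D 5 t) \<le> B5))"

definition seglen :: "(nat \<Rightarrow> real) \<Rightarrow> nat \<Rightarrow> real" where
  "seglen T j = T j - T (j - 1)"

definition chordq :: "(real \<Rightarrow> real^2) \<Rightarrow> (nat \<Rightarrow> real) \<Rightarrow> nat \<Rightarrow> real^2" where
  "chordq x T j = (1 / seglen T j) *\<^sub>R (x (T j) - x (T (j - 1)))"

definition kappa :: "(real \<Rightarrow> real^2) \<Rightarrow> (nat \<Rightarrow> real) \<Rightarrow> nat \<Rightarrow> real" where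
  "kappa x T j = sqrt (12 * (1 - (norm (chordq x T j))\<^sup>2)) / (seglen T j * norm (chordq x T j))"

definition admissible :: "real \<Rightarrow> (real \<Rightarrow> real^2) \<Rightarrow> (nat \<Rightarrow> real) \<Rightarrow> nat \<Rightarrow> bool" where
  "admissible C x T n \<longleftrightarrow> (\<forall>j\<in>{1..n}. kappa x T j \<ge> C)"

end

theory Submission
  imports Defs
begin

text \<open>Since the curve has unit speed and curvature at most B2, the chord over a parameter interval of
  length L has length at least L - B2 L^2, so every r_j is at least 1/2 once B2 L_j \<le> 1/2.
  Conversely, squaring the admissibility condition C L_j r_j \<le> sqrt (12 (1 - r_j^2)) and using
  L_j > Am \<epsilon> gives r_j^2 (12 + (C Am \<epsilon>)^2) \<le> 12, a bound strictly below 1.\<close>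

lemma norm_diff_le_of_vector_derivative_bound:
  fixes f :: "real \<Rightarrow> 'a::real_normed_vector"
  assumes "\<And>z. z \<in> {s..t} \<Longrightarrow> (f has_vector_derivative f' z) (at z within {s..t})"
    and bound: "\<And>z. z \<in> {s..t} \<Longrightarrow> norm (f' z) \<le> B"
    and "x \<in> {s..t}" "y \<in> {s..t}"
  shows "norm (f y - f x) \<le> B * \<bar>y - x\<bar>"
proof -
  have "onorm (\<lambda>h. h *\<^sub>R f' z) = norm (f' z)" for z
    using onorm_scaleR_left[OF bounded_linear_ident] by (simp add: onorm_id)
  then show ?thesis
    using differentiable_bound[of "{s..t}" f "\<lambda>z h. h *\<^sub>R f' z" B y x] assms
    by (simp add: has_vector_derivative_def)
qed

lemma chord_norm_ge_of_unit_tangent: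
  fixes f :: "real \<Rightarrow> 'a::real_normed_vector"
  assumes "s \<le> t"
    and f': "\<And>z. z \<in> {s..t} \<Longrightarrow> (f has_vector_derivative f' z) (at z within {s..t})"
    and f'': "\<And>z. z \<in> {s..t} \<Longrightarrow> (f' has_vector_derivative f'' z) (at z within {s..t})"
    and unit: "norm (f' s) = 1"
    and bound: "\<And>z. z \<in> {s..t} \<Longrightarrow> norm (f'' z) \<le> B"
  shows "(t - s) - B * (t - s)\<^sup>2 \<le> norm (f t - f s)"
proof -
  have "0 \<le> B"
    using order_trans[OF norm_ge_zero bound[of s]] \<open>s \<le> t\<close> by simp
  have "norm (f' z - f' s) \<le> B * (t - s)" if "z \<in> {s..t}" for z
  proof -
    have "norm (f' z - f' s) \<le> B * (z - s)"
      using norm_diff_le_of_vector_derivative_bound[OF f'' bound, of s z] that \<open>s \<le> t\<close> by simp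
    also have "\<dots> \<le> B * (t - s)"
      using that \<open>0 \<le> B\<close> by (simp add: mult_left_mono)
    finally show ?thesis .
  qed
  then have "norm (f t - f s - (t - s) *\<^sub>R f' s) \<le> (t - s) * (B * (t - s))"
    using vector_differentiable_bound_linearization[OF f', of s t s "B * (t - s)"] \<open>s \<le> t\<close>
    by (simp add: closed_segment_eq_real_ivl)
  moreover have "norm ((t - s) *\<^sub>R f' s) = t - s"
    using unit \<open>s \<le> t\<close> by simp
  ultimately show ?thesis
    using norm_triangle_ineq4[of "f t - f s" "f t - f s - (t - s) *\<^sub>R f' s"]
    by (simp add: power2_eq_square algebra_simps)
qed

lemma C5_unit_curve_chord_norm_ge:
  assumes curve: "C5_unit_curve T0 b x B2 B3 B4 B5"
    and "T0 \<le> s" "s \<le> t" "t \<le> b"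
  shows "(t - s) - B2 * (t - s)\<^sup>2 \<le> norm (x t - x s)"
proof -
  obtain D :: "nat \<Rightarrow> real \<Rightarrow> real^2" where
    "D 0 = x"
    and der: "\<forall>i<5. \<forall>z\<in>{T0..b}. (D i has_vector_derivative D (Suc i) z) (at z within {T0..b})"
    and unit: "\<forall>z\<in>{T0..b}. norm (D 1 z) = 1"
    and bound: "\<forall>z\<in>{T0..b}. norm (D 2 z) \<le> B2 \<and> norm (D 3 z) \<le> B3 \<and>
                               norm (D 4 z) \<le> B4 \<and> norm (D 5 z) \<le> B5"
    using curve unfolding C5_unit_curve_def by blast
  have sub: "{s..t} \<subseteq> {T0..b}"
    using assms by auto
  have "(D i has_vector_derivative D (Suc i) z) (at z within {s..t})" if "i < 5" "z \<in> {s..t}" for i z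
    using der that sub by (meson has_vector_derivative_within_subset subsetD)
  then show ?thesis
    using chord_norm_ge_of_unit_tangent[of s t "D 0" "D 1" "D 2" B2] unit bound sub assms
      \<open>D 0 = x\<close> by (auto simp: numeral_2_eq_2)
qed

lemma le_sqrt_of_kappa_ge:
  fixes C a L r :: real
  assumes "0 < C" "0 < a" "a < L" "0 \<le> r" "C \<le> sqrt (12 * (1 - r\<^sup>2)) / (L * r)"
  shows "r \<le> sqrt (12 / (12 + (C * a)\<^sup>2))"
proof -
  have "r \<noteq> 0"
    using assms by auto
  then have Lr: "0 < L * r"
    using assms by auto
  then have CLr: "C * (L * r) \<le> sqrt (12 * (1 - r\<^sup>2))"
    using assms(5) by (simp add: pos_le_divide_eq)
  moreover have "0 < C * (L * r)"
    using assms Lr by auto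
  ultimately have "(C * (L * r))\<^sup>2 \<le> 12 * (1 - r\<^sup>2)"
    by (metis less_le_trans power_mono real_sqrt_gt_0_iff real_sqrt_pow2 less_imp_le)
  moreover have "(C * a * r)\<^sup>2 \<le> (C * (L * r))\<^sup>2"
    using assms by (intro power_mono) (auto intro!: mult_right_mono mult_left_mono)
  ultimately have "r\<^sup>2 \<le> 12 / (12 + (C * a)\<^sup>2)"
    by (simp add: pos_le_divide_eq add_pos_nonneg power_mult_distrib algebra_simps)
  then show ?thesis
    using real_sqrt_le_mono assms(4) by fastforce
qed

lemma nodes_between_endpoints:
  fixes T :: "nat \<Rightarrow> real"
  assumes "\<forall>j\<in>{1..n}. 0 < seglen T j" "j \<in> {1..n}"
  shows "T 0 \<le> T (j - 1)" "T j \<le> T n"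
proof -
  have "T k \<le> T (Suc k)" if "k \<in> {..<n}" for k
    using assms(1)[rule_format, of "Suc k"] that by (simp add: seglen_def)
  then have mono: "T i \<le> T k" if "i \<le> k" "k \<le> n" for i k
    using lift_Suc_mono_le_ivl[of "{..<n}" T i k] that by fastforce
  show "T 0 \<le> T (j - 1)" "T j \<le> T n"
    using mono assms(2) by auto
qed

lemma chordq_norm_bounds:
  assumes curve: "C5_unit_curve T0 b x B2 B3 B4 B5"
    and "T0 \<le> T (j - 1)" "T j \<le> b"
    and "0 < a" "a < seglen T j" "B2 * seglen T j \<le> 1 / 2"
    and "0 < C" "C \<le> kappa x T j"
  shows "1 / 2 \<le> norm (chordq x T j)" "norm (chordq x T j) \<le> sqrt (12 / (12 + (C * a)\<^sup>2))"
proof -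
  define L where "L = seglen T j"
  have "0 < L"
    using assms L_def by linarith
  have "L - B2 * L\<^sup>2 \<le> norm (x (T j) - x (T (j - 1)))"
    using C5_unit_curve_chord_norm_ge[OF curve, of "T (j - 1)" "T j"] assms \<open>0 < L\<close>
    by (simp add: L_def seglen_def)
  moreover have "B2 * L * L \<le> 1 / 2 * L"
    using assms(6) \<open>0 < L\<close> by (intro mult_right_mono) (auto simp: L_def)
  then have "L / 2 \<le> L - B2 * L\<^sup>2"
    by (simp add: power2_eq_square)
  moreover have "norm (chordq x T j) = norm (x (T j) - x (T (j - 1))) / L"
    using \<open>0 < L\<close> by (simp add: chordq_def L_def)
  ultimately show "1 / 2 \<le> norm (chordq x T j)"
    using \<open>0 < L\<close> by (simp add: pos_le_divide_eq)
  show "norm (chordq x T j) \<le> sqrt (12 / (12 + (C * a)\<^sup>2))"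
    using assms by (intro le_sqrt_of_kappa_ge[of C a "seglen T j"]) (auto simp: kappa_def)
qed

theorem lemma1:
  fixes Am AM B2 B3 B4 C :: real
  assumes "0 < Am" "Am < AM" "0 < B2" "0 < B3" "0 < B4" "0 < C"
  shows "\<exists>\<delta>0 \<delta>1 :: real \<Rightarrow> real. \<forall>(B5::real) (n::nat). 0 < B5 \<and> 2 \<le> n \<longrightarrow>
    (\<exists>\<epsilon>0>0. \<forall>\<epsilon>. 0 < \<epsilon> \<and> \<epsilon> < \<epsilon>0 \<longrightarrow>
       0 < \<delta>0 \<epsilon> \<and> \<delta>0 \<epsilon> < \<delta>1 \<epsilon> \<and> \<delta>1 \<epsilon> < 1 \<and>
       (\<forall>T0 b (x :: real \<Rightarrow> real^2) (T :: nat \<Rightarrow> real).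
          T0 < b \<and> C5_unit_curve T0 b x B2 B3 B4 B5 \<and>
          T 0 = T0 \<and> T n \<le> b \<and>
          (\<forall>j\<in>{1..n}. Am * \<epsilon> < seglen T j \<and> seglen T j < AM * \<epsilon>) \<and>
          admissible C x T n
          \<longrightarrow> (\<forall>j\<in>{1..n}. \<delta>0 \<epsilon> \<le> norm (chordq x T j) \<and> norm (chordq x T j) \<le> \<delta>1 \<epsilon>)))"
proof -
  define \<delta>0 :: "real \<Rightarrow> real" where "\<delta>0 \<epsilon> = 1 / 2" for \<epsilon>
  define \<delta>1 :: "real \<Rightarrow> real" where "\<delta>1 \<epsilon> = sqrt (12 / (12 + (C * (Am * \<epsilon>))\<^sup>2))" for \<epsilon>
  define \<epsilon>0 where "\<epsilon>0 = min (1 / (2 * B2 * AM)) (1 / (C * Am))"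
  have "0 < \<epsilon>0"
    using assms by (simp add: \<epsilon>0_def)
  have small: "B2 * (AM * \<epsilon>) < 1 / 2" "C * (Am * \<epsilon>) < 1" if "0 < \<epsilon>" "\<epsilon> < \<epsilon>0" for \<epsilon>
    using that assms by (auto simp: \<epsilon>0_def field_simps)
  have deltas: "0 < \<delta>0 \<epsilon> \<and> \<delta>0 \<epsilon> < \<delta>1 \<epsilon> \<and> \<delta>1 \<epsilon> < 1" if "0 < \<epsilon>" "\<epsilon> < \<epsilon>0" for \<epsilon>
  proof -
    define K where "K = (C * (Am * \<epsilon>))\<^sup>2"
    have "0 < C * (Am * \<epsilon>)"
      using assms that by simp
    then have "0 < K" "K < 1"
      using small(2)[OF that] unfolding K_def by (auto simp: power_less_one_iff)
    have "sqrt (1 / 4) < sqrt (12 / (12 + K))"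
      using \<open>0 < K\<close> \<open>K < 1\<close> by (subst real_sqrt_less_iff) (simp add: field_simps)
    moreover have "sqrt (12 / (12 + K)) < 1"
      using \<open>0 < K\<close> by simp
    ultimately show ?thesis
      by (simp add: \<delta>0_def \<delta>1_def K_def real_sqrt_divide)
  qed
  have chords: "\<delta>0 \<epsilon> \<le> norm (chordq x T j) \<and> norm (chordq x T j) \<le> \<delta>1 \<epsilon>"
    if "0 < \<epsilon>" "\<epsilon> < \<epsilon>0" and curve: "C5_unit_curve T0 b x B2 B3 B4 B5"
      and "T 0 = T0" "T n \<le> b" "admissible C x T n" "j \<in> {1..n}"
      and seg: "\<forall>j\<in>{1..n}. Am * \<epsilon> < seglen T j \<and> seglen T j < AM * \<epsilon>"
    for \<epsilon> T0 b x T n B5 j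
  proof -
    have "\<forall>j\<in>{1..n}. 0 < seglen T j"
      using seg assms \<open>0 < \<epsilon>\<close> by (meson less_trans mult_pos_pos)
    moreover have "B2 * seglen T j \<le> 1 / 2"
      using seg \<open>j \<in> {1..n}\<close> small[OF that(1,2)] assms by (smt (verit) mult_strict_left_mono)
    ultimately show ?thesis
      using chordq_norm_bounds[OF curve, of T j "Am * \<epsilon>" C] nodes_between_endpoints[of n T j]
        that assms by (auto simp: admissible_def \<delta>0_def \<delta>1_def)
  qed
  show ?thesis
    using \<open>0 < \<epsilon>0\<close> deltas chords by blast
qed

end
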